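(* Let $A_1,\ldots,A_d$ be Hermitian $n\times n$ matrices such that the quadric $M_H=\{\Re e\, w_j={}^t\bar zA_jz,\ j=1,\dots,d\}\subset\mathbb C^{n+d}$ is strongly pseudoconvex, and let $b\in\mathbb R^d$ with $\sum_j b_jA_j$ invertible. For $a\in\mathbb C^d$ near $0$ put $P(a)=\sum_{j}a_jA_j$, $A(a)=\sum_j(b_j-a_j-\overline{a_j})A_j$, and let $X(a)$ be the unique $n\times n$ matrix with $\|X(a)\|<1$ solving $$P(a)X^2+A(a)X+{}^t\overline{P(a)}=0.$$ Let $a_0\in\mathbb R^d$ be small enough, and assume coordinates are chosen (by a linear change) so that $A(a_0)=\sum_j(b_j-2a_{0,j})A_j=I$. Write $P=P(a_0)$, $X=X(a_0)$ and let $\varphi:\mathcal M_n(\mathbb C)\to\mathcal M_n(\mathbb C)$, $\varphi(N)=N+P(NX+XN)$ (which is invertible for $a_0$ small). Then for every $s=1,\ldots,d$, $$\frac{\partial X}{\partial\,\Re e\, a_s}(a_0)=\varphi^{-1}\big(-A_s(I-X)^2\big)=-\varphi^{-1}(A_s)(I-X)^2.$$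
   Context: $M_H$ strongly pseudoconvex means there is $c\in\mathbb R^d$ with $\sum_j c_jA_j$ positive definite. $\mathcal M_n(\mathbb C)$ denotes complex $n\times n$ matrices. *)

theory Defs
  imports "HOL-Analysis.Analysis"
begin

definition cscale :: "complex \<Rightarrow> complex^'n^'m \<Rightarrow> complex^'n^'m" where
  "cscale c M = (\<chi> i j. c * M $ i $ j)"

definition adj :: "complex^'n^'m \<Rightarrow> complex^'m^'n" where
  "adj M = (\<chi> i j. cnj (M $ j $ i))"

definition hermitian :: "complex^'n^'n \<Rightarrow> bool" where
  "hermitian M \<longleftrightarrow> adj M = M"

definition herm_form :: "complex^'n^'n \<Rightarrow> complex^'n \<Rightarrow> complex" where
  "herm_form M v = (\<Sum>i\<in>UNIV. cnj (v $ i) * (M *v v) $ i)"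

definition pos_def :: "complex^'n^'n \<Rightarrow> bool" where
  "pos_def M \<longleftrightarrow> hermitian M \<and> (\<forall>v. v \<noteq> 0 \<longrightarrow> 0 < Re (herm_form M v))"

definition strongly_pseudoconvex :: "('d::finite \<Rightarrow> complex^'n^'n) \<Rightarrow> bool" where
  "strongly_pseudoconvex A \<longleftrightarrow>
     (\<exists>c::real^'d. pos_def (\<Sum>j\<in>UNIV. cscale (complex_of_real (c $ j)) (A j)))"

definition opnorm :: "complex^'n^'n \<Rightarrow> real" where
  "opnorm X = onorm (\<lambda>v. X *v v)"

definition Pm :: "('d::finite \<Rightarrow> complex^'n^'n) \<Rightarrow> complex^'d \<Rightarrow> complex^'n^'n" where
  "Pm A a = (\<Sum>j\<in>UNIV. cscale (a $ j) (A j))"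

definition Am :: "('d::finite \<Rightarrow> complex^'n^'n) \<Rightarrow> real^'d \<Rightarrow> complex^'d \<Rightarrow> complex^'n^'n" where
  "Am A b a = (\<Sum>j\<in>UNIV. cscale (complex_of_real (b $ j) - a $ j - cnj (a $ j)) (A j))"

definition Xsol :: "('d::finite \<Rightarrow> complex^'n^'n) \<Rightarrow> real^'d \<Rightarrow> complex^'d \<Rightarrow> complex^'n^'n" where
  "Xsol A b a = (THE X. opnorm X < 1 \<and>
       Pm A a ** X ** X + Am A b a ** X + adj (Pm A a) = 0)"

definition cvec :: "real^'d \<Rightarrow> complex^'d" where
  "cvec r = (\<chi> j. complex_of_real (r $ j))"

end

theory Submission
  imports Defs
begin

text \<open>
  Under the normalisation A(a0) = I, along the line a = a0 + t e_s the matrix X(a) is the small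
  solution of (P + t A_s) X^2 + (I - 2t A_s) X + (P + t A_s) = 0 with P = P(a0) small. It is the
  fixed point of the contraction X \<mapsto> X - (left-hand side) on the ball of radius 1/2, and since
  the Frobenius norm is at most CARD('n)^2 times the operator norm, the same contraction estimate
  excludes every other solution of operator norm < 1.
  Subtracting the equations at t and at 0 gives, for D = X(t) - X(0),
  \<phi>(D) = - (P D^2 + t A_s (I - X(t))^2),
  and \<phi> = id + (linear map of norm at most 1/2) is invertible with inverse of norm at most 2.
  This yields first D = O(t) and then D - t \<phi>^-1(- A_s (I - X)^2) = O(t^2). Finally
  \<phi>(N W) = \<phi>(N) W for every W commuting with X, in particular for W = (I - X)^2.
\<close>

lemma matrix_add_rdistrib: "((A::'a::semiring_1^'n^'m) + B) ** C = A ** C + B ** C"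
  by (vector matrix_matrix_mult_def sum.distrib[symmetric] field_simps)

lemma matrix_diff_ldistrib: "(A::'a::ring_1^'n^'m) ** (B - C) = A ** B - A ** C"
  by (vector matrix_matrix_mult_def sum_subtractf right_diff_distrib)

lemma matrix_diff_rdistrib: "((A::'a::ring_1^'n^'m) - B) ** C = A ** C - B ** C"
  by (vector matrix_matrix_mult_def sum_subtractf left_diff_distrib)

lemma matrix_neg_left: "(- (A::'a::ring_1^'n^'m)) ** B = - (A ** B)"
  by (vector matrix_matrix_mult_def sum_negf)

lemma matrix_neg_right: "(A::'a::ring_1^'n^'m) ** (- B) = - (A ** B)"
  by (vector matrix_matrix_mult_def sum_negf)

lemma matrix_times_2_eq_scaleR:
  fixes M :: "'a::real_algebra_1^'n^'m"
  shows "M * 2 = 2 *\<^sub>R M" and "2 * M = 2 *\<^sub>R M"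
  by (simp_all add: vec_eq_iff scaleR_2 mult_2 mult_2_right)

lemmas matrix_ring_simps = matrix_add_ldistrib matrix_add_rdistrib matrix_diff_ldistrib
  matrix_diff_rdistrib matrix_neg_left matrix_neg_right matrix_mul_assoc
  scalar_matrix_assoc[symmetric] matrix_scalar_ac matrix_times_2_eq_scaleR

lemma norm_sum_le_L2_set:
  fixes g :: "'k \<Rightarrow> 'a::real_normed_vector"
  assumes "\<And>k. k \<in> K \<Longrightarrow> norm (g k) \<le> c k * e k"
  shows "norm (\<Sum>k\<in>K. g k) \<le> L2_set c K * L2_set e K"
proof -
  have "norm (\<Sum>k\<in>K. g k) \<le> (\<Sum>k\<in>K. \<bar>c k\<bar> * \<bar>e k\<bar>)"
    by (rule order_trans[OF norm_sum sum_mono])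
      (metis assms abs_ge_self abs_mult order_trans)
  also have "\<dots> \<le> L2_set c K * L2_set e K"
    by (rule L2_set_mult_ineq)
  finally show ?thesis .
qed

lemma norm_vec_le_rowwise:
  fixes Z :: "'a::real_normed_vector^'m" and M :: "'b::real_normed_vector^'m"
  assumes "\<And>i. norm (Z $ i) \<le> norm (M $ i) * c" and "c \<ge> 0"
  shows "norm Z \<le> norm M * c"
proof -
  have "norm Z \<le> L2_set (\<lambda>i. c * norm (M $ i)) UNIV"
    unfolding norm_vec_def by (rule L2_set_mono) (use assms in \<open>auto simp: mult.commute\<close>)
  also have "\<dots> = norm M * c"
    using assms(2) by (simp add: L2_set_right_distrib[symmetric] norm_vec_def mult.commute)
  finally show ?thesis .
qed

lemma norm_vector_scalar_mult:
  "norm (c *s (v::'a::real_normed_div_algebra^'n)) = norm c * norm v"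
  by (simp add: norm_vec_def norm_mult L2_set_right_distrib)

lemma norm_matrix_mult_le:
  "norm ((M::'a::real_normed_div_algebra^'n^'m) ** (N::'a^'p^'n)) \<le> norm M * norm N"
proof (rule norm_vec_le_rowwise)
  fix i
  have "(M ** N) $ i = (\<Sum>k\<in>UNIV. M $ i $ k *s N $ k)"
    by (simp add: matrix_matrix_mult_def vec_eq_iff sum_component)
  also have "norm \<dots> \<le> norm (M $ i) * norm N"
    unfolding norm_vec_def[of "M $ i"] norm_vec_def[of N]
    by (rule norm_sum_le_L2_set) (simp add: norm_vector_scalar_mult)
  finally show "norm ((M ** N) $ i) \<le> norm (M $ i) * norm N" .
qed simp

lemma norm_matrix_vector_mult_le:
  "norm ((M::'a::real_normed_div_algebra^'n^'m) *v v) \<le> norm M * norm v"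
proof (rule norm_vec_le_rowwise)
  fix i
  have "norm ((M *v v) $ i) = norm (\<Sum>k\<in>UNIV. M $ i $ k * v $ k)"
    by (simp add: matrix_vector_mult_def)
  also have "\<dots> \<le> norm (M $ i) * norm v"
    unfolding norm_vec_def[of "M $ i"] norm_vec_def[of v]
    by (rule norm_sum_le_L2_set) (simp add: norm_mult)
  finally show "norm ((M *v v) $ i) \<le> norm (M $ i) * norm v" .
qed simp

lemma opnorm_le_norm: "opnorm M \<le> norm M"
  unfolding opnorm_def by (rule onorm_le) (simp add: norm_matrix_vector_mult_le)

lemma norm_le_card_sq_opnorm: "norm (M::complex^'n^'n) \<le> real CARD('n)^2 * opnorm M"
proof -
  have entry: "norm (M $ i $ j) \<le> opnorm M" for i j
  proof -
    have "M $ i $ j = (M *v axis j 1) $ i"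
      by (simp add: matrix_vector_mult_def axis_def if_distrib cong: if_cong)
    then have "norm (M $ i $ j) \<le> norm (M *v axis j 1)"
      by (simp add: Finite_Cartesian_Product.norm_nth_le)
    also have "\<dots> \<le> opnorm M * norm (axis j (1::complex))"
      unfolding opnorm_def by (rule onorm) simp
    finally show ?thesis by simp
  qed
  have "norm M \<le> (\<Sum>i\<in>UNIV. norm (M $ i))"
    by (simp add: norm_vec_def L2_set_le_sum)
  also have "\<dots> \<le> (\<Sum>i\<in>UNIV. \<Sum>j\<in>UNIV. norm (M $ i $ j))"
    by (intro sum_mono) (simp add: norm_vec_def L2_set_le_sum)
  also have "\<dots> \<le> (\<Sum>i\<in>(UNIV::'n set). \<Sum>j\<in>(UNIV::'n set). opnorm M)"
    by (intro sum_mono entry)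
  also have "\<dots> = real CARD('n)^2 * opnorm M"
    by (simp add: power2_eq_square)
  finally show ?thesis .
qed

lemma le_1_12_if_card_bound:
  assumes "\<delta> \<ge> 0" and "(real CARD('n::finite)^2 + 2) * \<delta> \<le> 1/4"
  shows "\<delta> \<le> 1/12"
proof -
  have "real CARD('n)^2 \<ge> 1"
    by (simp add: Suc_leI)
  then have "3 * \<delta> \<le> (real CARD('n)^2 + 2) * \<delta>"
    using assms(1) by (intro mult_right_mono) auto
  then show ?thesis
    using assms(2) by linarith
qed

definition quadratic_step :: "complex^'n^'n \<Rightarrow> complex^'n^'n \<Rightarrow> complex^'n^'n \<Rightarrow> complex^'n^'n \<Rightarrow> complex^'n^'n" where
  "quadratic_step P Q R X = X - (P ** X ** X + Q ** X + R)"

lemma norm_triangle3_minus: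
  fixes A B C :: "'a::real_normed_vector"
  shows "norm (- (A + B + C)) \<le> norm A + norm B + norm C"
  using norm_triangle_ineq[of "A + B" C] norm_triangle_ineq[of A B]
  unfolding norm_minus_cancel by linarith

lemma norm_quadratic_step_diff_le:
  assumes P: "norm P \<le> \<delta>" and Q: "norm (Q - mat 1) \<le> \<delta>"
  shows "norm (quadratic_step P Q R X - quadratic_step P Q R Y)
    \<le> \<delta> * (norm X + norm Y + 1) * norm (X - Y)"
proof -
  have "quadratic_step P Q R X - quadratic_step P Q R Y
      = - (P ** X ** (X - Y) + P ** (X - Y) ** Y + (Q - mat 1) ** (X - Y))"
    by (simp add: quadratic_step_def matrix_ring_simps algebra_simps)
  also have "norm \<dots> \<le> \<delta> * norm X * norm (X - Y) + \<delta> * norm (X - Y) * norm Y + \<delta> * norm (X - Y)"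
  proof (rule order_trans[OF norm_triangle3_minus add_mono[OF add_mono]])
    show "norm (P ** X ** (X - Y)) \<le> \<delta> * norm X * norm (X - Y)"
      using P by (meson mult_right_mono norm_ge_zero norm_matrix_mult_le order_trans)
    show "norm (P ** (X - Y) ** Y) \<le> \<delta> * norm (X - Y) * norm Y"
      using P by (meson mult_right_mono norm_ge_zero norm_matrix_mult_le order_trans)
    show "norm ((Q - mat 1) ** (X - Y)) \<le> \<delta> * norm (X - Y)"
      using Q by (meson mult_right_mono norm_ge_zero norm_matrix_mult_le order_trans)
  qed
  finally show ?thesis
    by (simp add: algebra_simps)
qed

lemma norm_quadratic_step_le:
  assumes P: "norm P \<le> \<delta>" and R: "norm R \<le> \<delta>" and Q: "norm (Q - mat 1) \<le> \<delta>"
    and "\<delta> \<le> 1/4" and X: "norm X \<le> 1/2"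
  shows "norm (quadratic_step P Q R X) \<le> 1/2"
proof -
  have "\<delta> \<ge> 0"
    using norm_ge_zero P by (rule order_trans)
  have "quadratic_step P Q R X = - (P ** X ** X + (Q - mat 1) ** X + R)"
    by (simp add: quadratic_step_def matrix_ring_simps)
  also have "norm \<dots> \<le> \<delta> * (1/2) * (1/2) + \<delta> * (1/2) + \<delta>"
  proof (rule order_trans[OF norm_triangle3_minus add_mono[OF add_mono]])
    show "norm (P ** X ** X) \<le> \<delta> * (1/2) * (1/2)"
      using P X \<open>\<delta> \<ge> 0\<close> norm_matrix_mult_le[of "P ** X" X] norm_matrix_mult_le[of P X]
      by (meson mult_mono norm_ge_zero order_trans mult_nonneg_nonneg)
    show "norm ((Q - mat 1) ** X) \<le> \<delta> * (1/2)"
      using Q X by (meson mult_mono norm_ge_zero norm_matrix_mult_le order_trans)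
  qed (rule R)
  finally show ?thesis
    using \<open>\<delta> \<le> 1/4\<close> by simp
qed

lemma small_solution_exists:
  fixes P Q R :: "complex^'n^'n"
  assumes P: "norm P \<le> \<delta>" and R: "norm R \<le> \<delta>" and Q: "norm (Q - mat 1) \<le> \<delta>"
    and "\<delta> \<le> 1/4"
  obtains X where "norm X \<le> 1/2" and "P ** X ** X + Q ** X + R = 0"
proof -
  let ?F = "quadratic_step P Q R"
  have "\<delta> \<ge> 0"
    using norm_ge_zero P by (rule order_trans)
  have "\<exists>!X\<in>cball 0 (1/2). ?F X = X"
  proof (rule Banach_fix[where c="1/2"])
    show "?F ` cball 0 (1/2) \<subseteq> cball 0 (1/2)"
      using norm_quadratic_step_le[OF P R Q \<open>\<delta> \<le> 1/4\<close>] by auto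
  next
    fix X Y :: "complex^'n^'n"
    assume "X \<in> cball 0 (1/2)" "Y \<in> cball 0 (1/2)"
    then have "\<delta> * (norm X + norm Y + 1) \<le> \<delta> * 2"
      using \<open>\<delta> \<ge> 0\<close> by (intro mult_left_mono) auto
    then have "\<delta> * (norm X + norm Y + 1) \<le> 1/2"
      using \<open>\<delta> \<le> 1/4\<close> by linarith
    then have "\<delta> * (norm X + norm Y + 1) * norm (X - Y) \<le> 1/2 * norm (X - Y)"
      by (rule mult_right_mono) simp
    then show "dist (?F X) (?F Y) \<le> 1/2 * dist X Y"
      using norm_quadratic_step_diff_le[OF P Q, of R X Y] by (simp add: dist_norm)
  qed (simp_all add: complete_eq_closed)
  then obtain X where X: "norm X \<le> 1/2" "?F X = X"
    by auto
  have "P ** X ** X + Q ** X + R = X - ?F X"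
    by (simp add: quadratic_step_def)
  then have "P ** X ** X + Q ** X + R = 0"
    using X(2) by simp
  with X(1) show ?thesis
    by (rule that)
qed

lemma small_solution_unique:
  fixes P Q R :: "complex^'n^'n"
  assumes P: "norm P \<le> \<delta>" and Q: "norm (Q - mat 1) \<le> \<delta>"
    and \<delta>: "(real CARD('n)^2 + 2) * \<delta> \<le> 1/4"
    and X: "norm X \<le> 1/2" "P ** X ** X + Q ** X + R = 0"
    and Y: "opnorm Y < 1" "P ** Y ** Y + Q ** Y + R = 0"
  shows "Y = X"
proof -
  define K where "K = real CARD('n)^2"
  have "\<delta> \<ge> 0"
    using P norm_ge_zero order_trans by blast
  have "norm Y \<le> K * opnorm Y"
    unfolding K_def by (rule norm_le_card_sq_opnorm)
  also have "\<dots> \<le> K"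
    using Y(1) by (intro mult_left_le) (auto simp: K_def)
  finally have "\<delta> * (norm Y + norm X + 1) \<le> \<delta> * (K + 3/2)"
    using X \<open>\<delta> \<ge> 0\<close> by (intro mult_left_mono) auto
  also have "\<dots> < 1"
    using \<delta> \<open>\<delta> \<ge> 0\<close> unfolding K_def by (simp add: algebra_simps)
  finally have contraction: "\<delta> * (norm Y + norm X + 1) < 1" .
  have "norm (Y - X) \<le> \<delta> * (norm Y + norm X + 1) * norm (Y - X)"
    using norm_quadratic_step_diff_le[OF P Q, of R Y X] X Y by (simp add: quadratic_step_def)
  then have "(1 - \<delta> * (norm Y + norm X + 1)) * norm (Y - X) \<le> 0"
    by (simp add: algebra_simps)
  with contraction show ?thesis
    by (simp add: mult_le_0_iff)
qed

definition small_root :: "complex^'n^'n \<Rightarrow> complex^'n^'n \<Rightarrow> complex^'n^'n \<Rightarrow> complex^'n^'n" where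
  "small_root P Q R = (THE X. opnorm X < 1 \<and> P ** X ** X + Q ** X + R = 0)"

lemma Xsol_eq_small_root: "Xsol A b a = small_root (Pm A a) (Am A b a) (adj (Pm A a))"
  by (simp add: Xsol_def small_root_def)

lemma small_root_solves:
  fixes P Q R :: "complex^'n^'n"
  assumes P: "norm P \<le> \<delta>" and R: "norm R \<le> \<delta>" and Q: "norm (Q - mat 1) \<le> \<delta>"
    and \<delta>: "(real CARD('n)^2 + 2) * \<delta> \<le> 1/4"
  shows "norm (small_root P Q R) \<le> 1/2"
    and "P ** small_root P Q R ** small_root P Q R + Q ** small_root P Q R + R = 0"
proof -
  have "\<delta> \<ge> 0"
    using norm_ge_zero P by (rule order_trans)
  then have "\<delta> \<le> 1/4"
    using le_1_12_if_card_bound[OF _ \<delta>] by simp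
  then obtain X where X: "norm X \<le> 1/2" "P ** X ** X + Q ** X + R = 0"
    using small_solution_exists[OF P R Q] by blast
  have "small_root P Q R = X"
    unfolding small_root_def
  proof (rule the_equality)
    show "opnorm X < 1 \<and> P ** X ** X + Q ** X + R = 0"
      using opnorm_le_norm[of X] X by simp
  qed (use small_solution_unique[OF P Q \<delta> X] in blast)
  with X show "norm (small_root P Q R) \<le> 1/2"
    and "P ** small_root P Q R ** small_root P Q R + Q ** small_root P Q R + R = 0"
    by simp_all
qed

definition phi :: "complex^'n^'n \<Rightarrow> complex^'n^'n \<Rightarrow> complex^'n^'n \<Rightarrow> complex^'n^'n" where
  "phi P X N = N + P ** (N ** X + X ** N)"

lemma linear_phi: "linear (phi P X)"
  by (rule linearI) (simp_all add: phi_def matrix_ring_simps algebra_simps)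

lemma norm_le_2_norm_phi:
  assumes "norm P * norm X \<le> 1/4"
  shows "norm N \<le> 2 * norm (phi P X N)"
proof -
  have "norm (P ** (N ** X + X ** N)) \<le> norm P * (norm N * norm X + norm X * norm N)"
    by (meson add_mono mult_left_mono norm_ge_zero norm_matrix_mult_le norm_triangle_le order_trans)
  also have "\<dots> = 2 * (norm P * norm X) * norm N"
    by (simp add: algebra_simps)
  also have "\<dots> \<le> 1/2 * norm N"
    using assms by (intro mult_right_mono) auto
  finally show ?thesis
    using norm_triangle_ineq4[of "phi P X N" "P ** (N ** X + X ** N)"] by (simp add: phi_def)
qed

lemma bij_phi:
  assumes "norm P * norm X \<le> 1/4"
  shows "bij (phi P X)"
proof -
  have "N = 0" if "phi P X N = 0" for N
    using norm_le_2_norm_phi[OF assms, of N] that by simp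
  then have "inj (phi P X)"
    by (simp add: linear_injective_0 linear_phi)
  then show ?thesis
    by (simp add: bij_def linear_injective_imp_surjective linear_phi)
qed

lemma inv_phi_neg_mult_commuting:
  assumes "bij (phi P X)" and "X ** W = W ** X"
  shows "inv (phi P X) (- (M ** W)) = - (inv (phi P X) M ** W)"
proof -
  define Z where "Z = inv (phi P X) M"
  have "phi P X (- (Z ** W)) = - (phi P X Z ** W)"
    using assms(2) by (simp add: phi_def matrix_ring_simps flip: matrix_mul_assoc)
  also have "phi P X Z = M"
    unfolding Z_def using assms(1) by (simp add: bij_is_surj surj_f_inv_f)
  finally show ?thesis
    unfolding Z_def using assms(1) by (metis bij_is_inj inv_f_f)
qed

lemma bij_phi_small_root:
  fixes P :: "complex^'n^'n"
  assumes P: "norm P \<le> \<delta>" and \<delta>: "(real CARD('n)^2 + 2) * \<delta> \<le> 1/4"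
  shows "bij (phi P (small_root P (mat 1) P))"
proof (rule bij_phi)
  have "\<delta> \<ge> 0"
    using norm_ge_zero P by (rule order_trans)
  then have "\<delta> \<le> 1/12" and "norm (small_root P (mat 1) P) \<le> 1/2"
    using le_1_12_if_card_bound \<delta> small_root_solves(1)[where Q = "mat 1", OF P P _ \<delta>] by simp_all
  then have "norm P * norm (small_root P (mat 1) P) \<le> 1/12 * (1/2)"
    using P by (intro mult_mono) auto
  then show "norm P * norm (small_root P (mat 1) P) \<le> 1/4"
    by simp
qed

lemma has_vector_derivative_at_0_if_quadratic_error:
  fixes f :: "real \<Rightarrow> 'a::real_normed_vector"
  assumes "t0 > 0" and "C \<ge> 0"
    and error: "\<And>t. \<bar>t\<bar> \<le> t0 \<Longrightarrow> norm (f t - f 0 - t *\<^sub>R Y) \<le> C * t^2"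
  shows "(f has_vector_derivative Y) (at 0)"
  unfolding has_vector_derivative_def has_derivative_at'
proof (intro conjI allI impI)
  show "bounded_linear (\<lambda>t. t *\<^sub>R Y)"
    by (rule bounded_linear_scaleR_left)
  fix e :: real
  assume "e > 0"
  show "\<exists>d>0. \<forall>t. 0 < norm (t - 0) \<and> norm (t - 0) < d \<longrightarrow>
      norm (f t - f 0 - (t - 0) *\<^sub>R Y) / norm (t - 0) < e"
  proof (intro exI conjI allI impI)
    show "min t0 (e / (C + 1)) > 0"
      using assms \<open>e > 0\<close> by simp
    fix t :: real
    assume "0 < norm (t - 0) \<and> norm (t - 0) < min t0 (e / (C + 1))"
    then have t: "\<bar>t\<bar> > 0" "\<bar>t\<bar> \<le> t0" "\<bar>t\<bar> < e / (C + 1)"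
      by auto
    have "norm (f t - f 0 - t *\<^sub>R Y) / \<bar>t\<bar> \<le> C * t^2 / \<bar>t\<bar>"
      using error[OF t(2)] by (rule divide_right_mono) simp
    also have "\<dots> = C * \<bar>t\<bar>"
      using t(1) by (simp add: field_simps power2_eq_square)
    also have "\<dots> \<le> C * (e / (C + 1))"
      using t \<open>C \<ge> 0\<close> by (intro mult_left_mono) auto
    also have "\<dots> < e"
      using \<open>e > 0\<close> \<open>C \<ge> 0\<close> by (simp add: field_simps)
    finally show "norm (f t - f 0 - (t - 0) *\<^sub>R Y) / norm (t - 0) < e"
      by simp
  qed
qed

lemma phi_diff_perturbed_root:
  fixes P X Y S :: "complex^'n^'n"
  assumes "P ** X ** X + X + P = 0"
    and "(P + t *\<^sub>R S) ** Y ** Y + (mat 1 - (2 * t) *\<^sub>R S) ** Y + (P + t *\<^sub>R S) = 0"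
  shows "phi P X (Y - X) = - (P ** (Y - X) ** (Y - X) + t *\<^sub>R (S ** ((mat 1 - Y) ** (mat 1 - Y))))"
proof -
  have "phi P X (Y - X) + (P ** (Y - X) ** (Y - X) + t *\<^sub>R (S ** ((mat 1 - Y) ** (mat 1 - Y))))
      = ((P + t *\<^sub>R S) ** Y ** Y + (mat 1 - (2 * t) *\<^sub>R S) ** Y + (P + t *\<^sub>R S))
        - (P ** X ** X + X + P)"
    by (simp add: phi_def matrix_ring_simps algebra_simps)
  also have "\<dots> = 0"
    using assms by simp
  finally show ?thesis
    by (simp only: eq_neg_iff_add_eq_0)
qed

lemma norm_one_minus_le:
  fixes M :: "complex^'n^'n"
  assumes "norm M \<le> 1/2"
  shows "norm (mat 1 - M) \<le> norm (mat 1 :: complex^'n^'n) + 1/2"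
  using norm_triangle_ineq4[of "mat 1" M] assms by simp

lemma norm_square_one_minus_diff_le:
  fixes X Y :: "complex^'n^'n"
  assumes X: "norm X \<le> 1/2" and Y: "norm Y \<le> 1/2"
  shows "norm ((mat 1 - Y) ** (mat 1 - Y) - (mat 1 - X) ** (mat 1 - X))
    \<le> norm (Y - X) * (1 + 2 * (norm (mat 1 :: complex^'n^'n) + 1/2))"
proof -
  define D where "D = Y - X"
  define m where "m = norm (mat 1 :: complex^'n^'n) + 1/2"
  have "norm D \<le> 1"
    using norm_triangle_ineq4[of Y X] X Y by (simp add: D_def)
  then have DD: "norm D * norm D \<le> norm D"
    by (simp add: mult_left_le)
  have "(mat 1 - Y) ** (mat 1 - Y) - (mat 1 - X) ** (mat 1 - X)
      = D ** D - D ** (mat 1 - X) - (mat 1 - X) ** D"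
    by (simp add: D_def matrix_ring_simps algebra_simps)
  also have "norm \<dots> \<le> norm (D ** D) + norm (D ** (mat 1 - X)) + norm ((mat 1 - X) ** D)"
    using norm_triangle_ineq4[of "D ** D - D ** (mat 1 - X)" "(mat 1 - X) ** D"]
      norm_triangle_ineq4[of "D ** D" "D ** (mat 1 - X)"] by simp
  also have "\<dots> \<le> norm D * norm D + norm D * m + m * norm D"
    using norm_matrix_mult_le[of D D] norm_matrix_mult_le[of D "mat 1 - X"]
      norm_matrix_mult_le[of "mat 1 - X" D]
      mult_left_mono[OF norm_one_minus_le[OF X] norm_ge_zero, of D]
      mult_right_mono[OF norm_one_minus_le[OF X] norm_ge_zero, of D]
    unfolding m_def by linarith
  also have "\<dots> \<le> norm D * (1 + 2 * m)"
    using DD by (simp add: algebra_simps)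
  finally show ?thesis
    by (simp add: D_def m_def)
qed

context
  fixes P X :: "complex^'n^'n"
  assumes P_small: "norm P \<le> 1/4" and X_small: "norm X \<le> 1/2"
    and X_root: "P ** X ** X + X + P = 0"
begin

lemma norm_le_2_norm_phi_at_root: "norm N \<le> 2 * norm (phi P X N)"
proof (rule norm_le_2_norm_phi)
  have "norm P * norm X \<le> 1/4 * 1"
    using P_small X_small by (intro mult_mono) auto
  then show "norm P * norm X \<le> 1/4"
    by simp
qed

lemma norm_quadratic_remainder_le:
  assumes "norm D \<le> 1"
  shows "norm (- (P ** D ** D + t *\<^sub>R (S ** M))) \<le> norm D * norm D / 4 + \<bar>t\<bar> * (norm S * norm M)"
proof -
  have "norm (P ** D ** D) \<le> norm P * norm D * norm D"
    by (meson mult_right_mono norm_ge_zero norm_matrix_mult_le order_trans)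
  also have "\<dots> \<le> 1/4 * norm D * norm D"
    using P_small by (intro mult_right_mono) auto
  finally have "norm (P ** D ** D) \<le> norm D * norm D / 4"
    by simp
  moreover have "norm (t *\<^sub>R (S ** M)) \<le> \<bar>t\<bar> * (norm S * norm M)"
    by (simp add: mult_left_mono norm_matrix_mult_le)
  ultimately show ?thesis
    using norm_triangle_ineq[of "P ** D ** D" "t *\<^sub>R (S ** M)"]
    unfolding norm_minus_cancel by linarith
qed

lemma norm_perturbed_root_diff_le:
  assumes Y: "norm Y \<le> 1/2"
    and Y_root: "(P + t *\<^sub>R S) ** Y ** Y + (mat 1 - (2 * t) *\<^sub>R S) ** Y + (P + t *\<^sub>R S) = 0"
  shows "norm (Y - X) \<le> 4 * norm S * (norm (mat 1 :: complex^'n^'n) + 1/2)^2 * \<bar>t\<bar>"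
proof -
  let ?m = "norm (mat 1 :: complex^'n^'n) + 1/2"
  let ?W = "(mat 1 - Y) ** (mat 1 - Y)"
  have D1: "norm (Y - X) \<le> 1"
    using norm_triangle_ineq4[of Y X] X_small Y by simp
  then have DD: "norm (Y - X) * norm (Y - X) \<le> norm (Y - X)"
    by (simp add: mult_left_le)
  have "norm ?W \<le> ?m * ?m"
    using norm_matrix_mult_le
      mult_mono[OF norm_one_minus_le[OF Y] norm_one_minus_le[OF Y] _ norm_ge_zero]
    by (rule order_trans) simp
  then have W: "norm S * norm ?W \<le> norm S * ?m^2"
    by (simp add: mult_left_mono power2_eq_square)
  have "norm (Y - X) \<le> 2 * norm (phi P X (Y - X))"
    by (rule norm_le_2_norm_phi_at_root)
  also have "\<dots> \<le> 2 * (norm (Y - X) * norm (Y - X) / 4 + \<bar>t\<bar> * (norm S * norm ?W))"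
    unfolding phi_diff_perturbed_root[OF X_root Y_root]
    using norm_quadratic_remainder_le[OF D1] by (rule mult_left_mono) simp
  also have "\<dots> \<le> 2 * (norm (Y - X) * norm (Y - X) / 4 + \<bar>t\<bar> * (norm S * ?m^2))"
    using W by (simp add: mult_left_mono)
  also have "\<dots> = norm (Y - X) * norm (Y - X) / 2 + 2 * (\<bar>t\<bar> * (norm S * ?m^2))"
    by simp
  finally have "norm (Y - X) \<le> 4 * (\<bar>t\<bar> * (norm S * ?m^2))"
    using DD by linarith
  then show ?thesis
    by (simp add: mult_ac)
qed

lemma perturbed_root_quadratic_error:
  assumes Z: "phi P X Z = - (S ** ((mat 1 - X) ** (mat 1 - X)))"
  shows "\<exists>C\<ge>0. \<forall>t Y. norm Y \<le> 1/2 \<longrightarrow>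
           (P + t *\<^sub>R S) ** Y ** Y + (mat 1 - (2 * t) *\<^sub>R S) ** Y + (P + t *\<^sub>R S) = 0 \<longrightarrow>
           norm (Y - X - t *\<^sub>R Z) \<le> C * t^2"
proof -
  define a where "a = norm S"
  define m where "m = norm (mat 1 :: complex^'n^'n) + 1/2"
  define C1 where "C1 = 4 * a * m^2"
  define C where "C = C1^2 / 2 + 2 * a * (1 + 2 * m) * C1"
  have a: "a \<ge> 0" and m: "m \<ge> 0"
    by (simp_all add: a_def m_def)
  then have C1: "C1 \<ge> 0" and C: "C \<ge> 0"
    by (simp_all add: C1_def C_def)
  have "norm (Y - X - t *\<^sub>R Z) \<le> C * t^2"
    if Y: "norm Y \<le> 1/2"
      and Y_root: "(P + t *\<^sub>R S) ** Y ** Y + (mat 1 - (2 * t) *\<^sub>R S) ** Y + (P + t *\<^sub>R S) = 0"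
    for t Y
  proof -
    define D where "D = Y - X"
    have D1: "norm D \<le> 1"
      using norm_triangle_ineq4[of Y X] X_small Y by (simp add: D_def)
    have D_lin: "norm D \<le> C1 * \<bar>t\<bar>"
      using norm_perturbed_root_diff_le[OF Y Y_root] by (simp add: D_def C1_def a_def m_def)
    define V where "V = (mat 1 - Y) ** (mat 1 - Y) - (mat 1 - X) ** (mat 1 - X)"
    have V: "norm V \<le> norm D * (1 + 2 * m)"
      unfolding V_def D_def m_def by (rule norm_square_one_minus_diff_le[OF X_small Y])
    have "phi P X (D - t *\<^sub>R Z) = phi P X D - t *\<^sub>R phi P X Z"
      by (simp add: linear_diff linear_cmul linear_phi)
    also have "\<dots> = - (P ** D ** D + t *\<^sub>R (S ** V))"
      unfolding D_def phi_diff_perturbed_root[OF X_root Y_root] Z V_def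
      by (simp add: matrix_ring_simps algebra_simps)
    finally have "norm (D - t *\<^sub>R Z) \<le> 2 * (norm D * norm D / 4 + \<bar>t\<bar> * (a * norm V))"
      using norm_le_2_norm_phi_at_root[of "D - t *\<^sub>R Z"] norm_quadratic_remainder_le[OF D1, of t S V]
      unfolding a_def by simp
    also have "\<dots> \<le> 2 * ((C1 * \<bar>t\<bar>) * (C1 * \<bar>t\<bar>) / 4
        + \<bar>t\<bar> * (a * ((C1 * \<bar>t\<bar>) * (1 + 2 * m))))"
    proof -
      have "norm D * (1 + 2 * m) \<le> (C1 * \<bar>t\<bar>) * (1 + 2 * m)"
        using D_lin m by (intro mult_right_mono) auto
      with V have "norm V \<le> (C1 * \<bar>t\<bar>) * (1 + 2 * m)"
        by (rule order_trans)
      moreover have "norm D * norm D \<le> (C1 * \<bar>t\<bar>) * (C1 * \<bar>t\<bar>)"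
        using D_lin C1 by (intro mult_mono) auto
      ultimately show ?thesis
        using a by (intro mult_left_mono add_mono divide_right_mono) auto
    qed
    also have "\<dots> = C * t^2"
      by (simp add: C_def power2_eq_square algebra_simps)
    finally show ?thesis
      by (simp add: D_def)
  qed
  then show ?thesis
    using C by blast
qed

end

lemma perturbed_coefficients_small:
  fixes P S :: "complex^'n^'n"
  assumes "norm P < \<delta>" and t: "\<bar>t\<bar> \<le> (\<delta> - norm P) / (2 * (norm S + 1))"
  shows "norm (P + t *\<^sub>R S) \<le> \<delta>" and "norm ((mat 1 - (2 * t) *\<^sub>R S) - mat 1) \<le> \<delta>"
proof -
  define k where "k = norm S + 1"
  have "k > 0"
    using norm_ge_zero[of S] unfolding k_def by linarith
  have "2 * (\<bar>t\<bar> * norm S) \<le> 2 * ((\<delta> - norm P) / (2 * k) * k)"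
    using t unfolding k_def by (intro mult_left_mono mult_mono) auto
  also have "\<dots> = \<delta> - norm P"
    using \<open>k > 0\<close> by simp
  finally have tS: "2 * (\<bar>t\<bar> * norm S) \<le> \<delta> - norm P" .
  show "norm (P + t *\<^sub>R S) \<le> \<delta>"
    using norm_triangle_ineq[of P "t *\<^sub>R S"] tS assms(1) by simp
  have "norm ((mat 1 - (2 * t) *\<^sub>R S) - mat 1) = 2 * (\<bar>t\<bar> * norm S)"
    by (simp add: abs_mult)
  then show "norm ((mat 1 - (2 * t) *\<^sub>R S) - mat 1) \<le> \<delta>"
    using tS norm_ge_zero[of P] by linarith
qed

lemma has_vector_derivative_small_root:
  fixes P S :: "complex^'n^'n"
  assumes P: "norm P < \<delta>" and \<delta>: "(real CARD('n)^2 + 2) * \<delta> \<le> 1/4"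
  defines "X \<equiv> small_root P (mat 1) P"
  shows "((\<lambda>t. small_root (P + t *\<^sub>R S) (mat 1 - (2 * t) *\<^sub>R S) (P + t *\<^sub>R S))
           has_vector_derivative inv (phi P X) (- (S ** ((mat 1 - X) ** (mat 1 - X))))) (at 0)"
proof -
  have "\<delta> \<ge> 0"
    using norm_ge_zero[of P] P by linarith
  then have "\<delta> \<le> 1/12"
    using le_1_12_if_card_bound \<delta> by blast
  have X: "norm X \<le> 1/2" and X_root: "P ** X ** X + X + P = 0"
    using small_root_solves[where Q = "mat 1", OF less_imp_le[OF P] less_imp_le[OF P] _ \<delta>] \<open>\<delta> \<ge> 0\<close>
    by (simp_all add: X_def)
  define Z where "Z = inv (phi P X) (- (S ** ((mat 1 - X) ** (mat 1 - X))))"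
  have "phi P X Z = - (S ** ((mat 1 - X) ** (mat 1 - X)))"
    using bij_phi_small_root[OF less_imp_le[OF P] \<delta>]
    unfolding Z_def X_def by (simp add: bij_is_surj surj_f_inv_f)
  then obtain C where "C \<ge> 0" and error: "\<And>t Y. norm Y \<le> 1/2 \<Longrightarrow>
      (P + t *\<^sub>R S) ** Y ** Y + (mat 1 - (2 * t) *\<^sub>R S) ** Y + (P + t *\<^sub>R S) = 0 \<Longrightarrow>
      norm (Y - X - t *\<^sub>R Z) \<le> C * t^2"
    using perturbed_root_quadratic_error[OF _ X X_root] \<open>\<delta> \<le> 1/12\<close> P by fastforce
  define t0 where "t0 = (\<delta> - norm P) / (2 * (norm S + 1))"
  have "t0 > 0"
    using P unfolding t0_def by (intro divide_pos_pos mult_pos_pos add_nonneg_pos) auto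
  show ?thesis
    unfolding Z_def[symmetric]
  proof (rule has_vector_derivative_at_0_if_quadratic_error[OF \<open>t0 > 0\<close> \<open>C \<ge> 0\<close>])
    fix t :: real
    assume "\<bar>t\<bar> \<le> t0"
    then show "norm (small_root (P + t *\<^sub>R S) (mat 1 - (2 * t) *\<^sub>R S) (P + t *\<^sub>R S)
        - small_root (P + 0 *\<^sub>R S) (mat 1 - (2 * 0) *\<^sub>R S) (P + 0 *\<^sub>R S) - t *\<^sub>R Z) \<le> C * t^2"
      using error small_root_solves[OF _ _ _ \<delta>] perturbed_coefficients_small[OF P]
      by (simp add: X_def t0_def)
  qed
qed

lemma Pm_cvec: "Pm A (cvec r) = (\<Sum>j\<in>UNIV. r $ j *\<^sub>R A j)"
  by (simp add: Pm_def cvec_def cscale_def vec_eq_iff scaleR_conv_of_real[where 'a=complex])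

lemma Am_cvec: "Am A b (cvec r) = (\<Sum>j\<in>UNIV. b $ j *\<^sub>R A j) - 2 *\<^sub>R Pm A (cvec r)"
  by (simp add: Am_def Pm_def cvec_def cscale_def vec_eq_iff scaleR_conv_of_real[where 'a=complex]
      sum_distrib_left sum_subtractf algebra_simps)

lemma sum_axis_scaleR:
  fixes A :: "'d::finite \<Rightarrow> 'a::real_vector"
  shows "(\<Sum>j\<in>UNIV. axis s t $ j *\<^sub>R A j) = t *\<^sub>R A s"
proof -
  have "(\<Sum>j\<in>UNIV. axis s t $ j *\<^sub>R A j) = (\<Sum>j\<in>UNIV. if j = s then t *\<^sub>R A j else 0)"
    by (rule sum.cong) (auto simp: axis_def)
  then show ?thesis
    by simp
qed

lemma cvec_add_axis: "cvec r + (\<chi> j. if j = s then complex_of_real t else 0) = cvec (r + axis s t)"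
  by (simp add: cvec_def axis_def vec_eq_iff)

lemma Pm_cvec_add_axis: "Pm A (cvec (r + axis s t)) = Pm A (cvec r) + t *\<^sub>R A s"
  by (simp add: Pm_cvec scaleR_add_left sum.distrib sum_axis_scaleR)

lemma Am_cvec_add_axis: "Am A b (cvec (r + axis s t)) = Am A b (cvec r) - (2 * t) *\<^sub>R A s"
  by (simp add: Am_cvec Pm_cvec_add_axis scaleR_add_right)

lemma adj_real_combination: "adj (\<Sum>j\<in>UNIV. c j *\<^sub>R M j) = (\<Sum>j\<in>UNIV. c j *\<^sub>R adj (M j))"
  by (simp add: adj_def vec_eq_iff sum_component)

lemma hermitian_Pm_cvec:
  assumes "\<And>j. hermitian (A j)"
  shows "adj (Pm A (cvec r)) = Pm A (cvec r)"
  using assms by (simp add: Pm_cvec adj_real_combination hermitian_def)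

lemma norm_Pm_cvec_le: "norm (Pm A (cvec r)) \<le> norm r * (\<Sum>j\<in>UNIV. norm (A j))"
  unfolding Pm_cvec sum_distrib_left
  by (rule order_trans[OF norm_sum sum_mono]) (simp add: mult_right_mono component_le_norm_cart)

lemma Xsol_derivative_at_normalized_point:
  fixes A :: "'d::finite \<Rightarrow> complex^'n^'n" and a0 :: "real^'d"
  assumes herm: "\<And>j. hermitian (A j)"
    and small: "norm (Pm A (cvec a0)) < \<delta>" and \<delta>: "(real CARD('n)^2 + 2) * \<delta> \<le> 1/4"
    and normalized: "Am A b (cvec a0) = mat 1"
  shows "let P = Pm A (cvec a0); X = Xsol A b (cvec a0);
          \<phi> = (\<lambda>N::complex^'n^'n. N + P ** (N ** X + X ** N));
          IX2 = (mat 1 - X) ** (mat 1 - X)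
      in bij \<phi> \<and>
         (\<forall>s::'d.
            ((\<lambda>t::real. Xsol A b (cvec a0 + (\<chi> j. if j = s then complex_of_real t else 0)))
               has_vector_derivative inv \<phi> (- (A s ** IX2))) (at 0)
          \<and> inv \<phi> (- (A s ** IX2)) = - (inv \<phi> (A s) ** IX2))"
proof -
  define P where "P = Pm A (cvec a0)"
  define X where "X = small_root P (mat 1) P"
  have Xsol_a0: "Xsol A b (cvec a0) = X"
    unfolding X_def P_def Xsol_eq_small_root hermitian_Pm_cvec[OF herm] normalized ..
  have Xsol_path: "Xsol A b (cvec a0 + (\<chi> j. if j = s then complex_of_real t else 0))
      = small_root (P + t *\<^sub>R A s) (mat 1 - (2 * t) *\<^sub>R A s) (P + t *\<^sub>R A s)" for s t
    unfolding Xsol_eq_small_root cvec_add_axis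
    unfolding hermitian_Pm_cvec[OF herm]
    unfolding Pm_cvec_add_axis Am_cvec_add_axis normalized P_def ..
  have phi_eq: "(\<lambda>N. N + P ** (N ** X + X ** N)) = phi P X"
    by (simp add: fun_eq_iff phi_def)
  have commute: "X ** ((mat 1 - X) ** (mat 1 - X)) = ((mat 1 - X) ** (mat 1 - X)) ** X"
    by (simp add: matrix_ring_simps)
  have bij: "bij (phi P X)"
    unfolding X_def using small \<delta> by (intro bij_phi_small_root) (auto simp: P_def)
  show ?thesis
    unfolding Let_def P_def[symmetric] Xsol_a0 Xsol_path phi_eq
    using bij has_vector_derivative_small_root[OF small[folded P_def] \<delta>]
      inv_phi_neg_mult_commuting[OF bij commute]
    by (simp add: X_def)
qed

theorem lemma4p1:
  fixes A :: "'d::finite \<Rightarrow> complex^'n^'n" and b :: "real^'d"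
  assumes herm: "\<And>j. hermitian (A j)"
    and spc: "strongly_pseudoconvex A"
    and binv: "invertible (\<Sum>j\<in>UNIV. cscale (complex_of_real (b $ j)) (A j))"
  shows "\<exists>\<epsilon>>0. \<forall>a0::real^'d. norm a0 < \<epsilon> \<longrightarrow> Am A b (cvec a0) = mat 1 \<longrightarrow>
     (let P = Pm A (cvec a0); X = Xsol A b (cvec a0);
          \<phi> = (\<lambda>N::complex^'n^'n. N + P ** (N ** X + X ** N));
          IX2 = (mat 1 - X) ** (mat 1 - X)
      in bij \<phi> \<and>
         (\<forall>s::'d.
            ((\<lambda>t::real. Xsol A b (cvec a0 + (\<chi> j. if j = s then complex_of_real t else 0)))
               has_vector_derivative inv \<phi> (- (A s ** IX2))) (at 0)
          \<and> inv \<phi> (- (A s ** IX2)) = - (inv \<phi> (A s) ** IX2)))"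
proof -
  define \<delta> :: real where "\<delta> = 1 / (4 * (real CARD('n)^2 + 2))"
  have \<delta>: "(real CARD('n)^2 + 2) * \<delta> \<le> 1/4" and "\<delta> > 0"
    by (simp_all add: \<delta>_def add_nonneg_pos)
  define c where "c = (\<Sum>j\<in>UNIV. norm (A j)) + 1"
  have "c > 0"
    unfolding c_def by (simp add: add_nonneg_pos sum_nonneg)
  have "norm (Pm A (cvec a0)) < \<delta>" if "norm a0 < \<delta> / c" for a0 :: "real^'d"
  proof -
    have "norm (Pm A (cvec a0)) \<le> norm a0 * (\<Sum>j\<in>UNIV. norm (A j))"
      by (rule norm_Pm_cvec_le)
    also have "\<dots> \<le> norm a0 * c"
      unfolding c_def by (intro mult_left_mono) auto
    also have "\<dots> < \<delta>"
      using that \<open>c > 0\<close> by (simp add: pos_less_divide_eq)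
    finally show ?thesis .
  qed
  with Xsol_derivative_at_normalized_point[where A = A, OF herm _ \<delta>] \<open>\<delta> > 0\<close> \<open>c > 0\<close> show ?thesis
    by (intro exI[of _ "\<delta> / c"]) auto
qed

end
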